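(* Let $\delta_B,\delta_R\ge 1$ be integers, and for $\lambda\in\mathbb C$ let $\mu^\pm(\lambda)$ be the eigenvalues of the matrix $T_0(\lambda)$ defined in the context, i.e. \[\mu^\pm(\lambda)=\tfrac12\operatorname{tr}T_0(\lambda)\pm\sqrt{\tfrac14(\operatorname{tr}T_0(\lambda))^2-\tfrac{1}{\delta_B\delta_R}}.\] Then, as $\lambda\to-\infty$ along the real axis, \[\lim_{\lambda\to-\infty}e^{-2|\operatorname{Im}\sqrt\lambda|}\mu^+(\lambda)=\frac{\delta_R+1}{2\delta_R}\cdot\frac{\delta_B+1}{2\delta_B},\qquad \lim_{\lambda\to-\infty}e^{2|\operatorname{Im}\sqrt\lambda|}\mu^-(\lambda)=\frac{2}{\delta_R+1}\cdot\frac{2}{\delta_B+1}.\]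
   Context: Write $\omega=\sqrt\lambda$ and define the entire functions of $\lambda$: $c(\lambda)=\cos\omega$, $c'(\lambda)=-\omega\sin\omega$, $s(\lambda)=\sin\omega/\omega$, $s'(\lambda)=\cos\omega$. Let $M_0(\lambda)=\begin{pmatrix}c&s\\ c'&s'\end{pmatrix}$, $J_B=\begin{pmatrix}1&0\\0&1/\delta_B\end{pmatrix}$, $J_R=\begin{pmatrix}1&0\\0&1/\delta_R\end{pmatrix}$, and $T_0(\lambda)=J_RM_0(\lambda)J_BM_0(\lambda)$ (the transition matrix propagating initial data $(y,y')$ over two consecutive edges of the biregular tree with degrees $\delta_B+1$, $\delta_R+1$). Then $\det T_0(\lambda)=1/(\delta_B\delta_R)$ and $\operatorname{tr}T_0(\lambda)=\cos^2\omega\,(1+\frac{1}{\delta_B\delta_R})-\sin^2\omega\,(\frac1{\delta_R}+\frac1{\delta_B})$. For real $\lambda<0$ this trace is real and, for $|\lambda|$ large, larger than $2/\sqrt{\delta_B\delta_R}$, so $\mu^\pm(\lambda)$ are real with the nonnegative square root taken. *)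

theory Defs
  imports "HOL-Analysis.Analysis"
begin

text \<open>omega = sqrt lambda (principal branch); the functions below are even in omega,
  so they are the entire functions of lambda from the paper.\<close>
definition omg :: "complex \<Rightarrow> complex" where "omg l = csqrt l"

definition cfun :: "complex \<Rightarrow> complex" where "cfun l = cos (omg l)"
definition cfun' :: "complex \<Rightarrow> complex" where "cfun' l = - omg l * sin (omg l)"
definition sfun :: "complex \<Rightarrow> complex" where
  "sfun l = (if omg l = 0 then 1 else sin (omg l) / omg l)"
definition sfun' :: "complex \<Rightarrow> complex" where "sfun' l = cos (omg l)"

definition M0 :: "complex \<Rightarrow> complex^2^2" where
  "M0 l = vector [vector [cfun l, sfun l], vector [cfun' l, sfun' l]]"

definition Jmat :: "nat \<Rightarrow> complex^2^2" where
  "Jmat d = vector [vector [1, 0], vector [0, 1 / of_nat d]]"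

definition T0 :: "nat \<Rightarrow> nat \<Rightarrow> complex \<Rightarrow> complex^2^2" where
  "T0 dB dR l = Jmat dR ** M0 l ** Jmat dB ** M0 l"

definition mu_plus :: "nat \<Rightarrow> nat \<Rightarrow> complex \<Rightarrow> complex" where
  "mu_plus dB dR l = trace (T0 dB dR l) / 2
     + csqrt ((trace (T0 dB dR l))\<^sup>2 / 4 - 1 / (of_nat dB * of_nat dR))"

definition mu_minus :: "nat \<Rightarrow> nat \<Rightarrow> complex \<Rightarrow> complex" where
  "mu_minus dB dR l = trace (T0 dB dR l) / 2
     - csqrt ((trace (T0 dB dR l))\<^sup>2 / 4 - 1 / (of_nat dB * of_nat dR))"

end

theory Submission
  imports Defs "HOL-Real_Asymp.Real_Asymp"
begin

text \<open>For \<open>\<lambda> = -t\<^sup>2 < 0\<close> we have \<open>\<omega> = \<i> t\<close>, so the entries of \<open>M\<^sub>0\<close> are hyperbolic functions of \<open>t\<close>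
  and \<open>tr T\<^sub>0 = (1 + p) cosh\<^sup>2 t + (1/\<delta>\<^sub>B + 1/\<delta>\<^sub>R) sinh\<^sup>2 t \<ge> 1 + p\<close> with \<open>p = 1/(\<delta>\<^sub>B \<delta>\<^sub>R)\<close>,
  so both eigenvalues are real. Multiplying the larger one by \<open>u = exp (-2t)\<close> gives the larger root of
  a quadratic whose coefficients are polynomials in \<open>u\<close>; at \<open>u = 0\<close> that root is
  \<open>(1 + p + 1/\<delta>\<^sub>B + 1/\<delta>\<^sub>R)/4 = (1 + 1/\<delta>\<^sub>B)(1 + 1/\<delta>\<^sub>R)/4\<close>. The limit for \<open>\<mu>\<^sup>-\<close> then follows from
  \<open>\<mu>\<^sup>+ \<mu>\<^sup>- = det T\<^sub>0 = p\<close>.\<close>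

lemma trace_T0:
  "trace (T0 dB dR l) = cfun l ^ 2 + sfun l * cfun' l / of_nat dB
     + (cfun' l * sfun l + sfun' l ^ 2 / of_nat dB) / of_nat dR"
  unfolding T0_def trace_def M0_def Jmat_def
  by (simp add: sum_2 matrix_matrix_mult_def power2_eq_square add_divide_distrib mult.commute)

lemma mu_plus_mult_mu_minus: "mu_plus dB dR l * mu_minus dB dR l = 1 / (of_nat dB * of_nat dR)"
proof -
  have "(a + s) * (a - s) = a\<^sup>2 - s\<^sup>2" for a s :: complex
    by (simp add: power2_eq_square algebra_simps)
  then show ?thesis
    unfolding mu_plus_def mu_minus_def by (simp add: power_divide)
qed

lemma omg_of_real_neg: "x < 0 \<Longrightarrow> omg (of_real x) = \<i> * of_real (sqrt (- x))"
  by (simp add: omg_def)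

lemma cos_i_times_of_real: "cos (\<i> * of_real t) = of_real (cosh t)"
  by (simp add: cosh_real [symmetric] cosh_field_def exp_minus)

lemma sin_i_times_of_real: "sin (\<i> * of_real t) = \<i> * of_real (sinh t)"
  by (simp add: sin_i_times sinh_field_def exp_minus exp_of_real)

lemma
  fixes x :: real
  assumes "x < 0"
  defines "t \<equiv> sqrt (- x)"
  shows cfun_of_real_neg: "cfun (of_real x) = of_real (cosh t)"
    and sfun'_of_real_neg: "sfun' (of_real x) = of_real (cosh t)"
    and sfun_of_real_neg: "sfun (of_real x) = of_real (sinh t / t)"
    and cfun'_of_real_neg: "cfun' (of_real x) = of_real (t * sinh t)"
  using assms
  by (simp_all add: t_def cfun_def sfun'_def sfun_def cfun'_def omg_of_real_neg
      cos_i_times_of_real sin_i_times_of_real mult_ac)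

definition trace_neg :: "nat \<Rightarrow> nat \<Rightarrow> real \<Rightarrow> real" where
  "trace_neg dB dR t =
     (1 + 1 / (real dB * real dR)) * (cosh t)\<^sup>2 + (1 / real dB + 1 / real dR) * (sinh t)\<^sup>2"

lemma trace_T0_of_real_neg:
  assumes "x < 0"
  shows "trace (T0 dB dR (of_real x)) = of_real (trace_neg dB dR (sqrt (- x)))"
proof -
  have "sqrt (- x) > 0"
    using assms by simp
  then show ?thesis
    unfolding trace_T0 cfun_of_real_neg[OF assms] sfun_of_real_neg[OF assms]
      cfun'_of_real_neg[OF assms] sfun'_of_real_neg[OF assms]
    by (simp add: trace_neg_def power2_eq_square algebra_simps add_divide_distrib)
qed

lemma one_plus_le_trace_neg: "1 + 1 / (real dB * real dR) \<le> trace_neg dB dR t"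
  unfolding trace_neg_def cosh_square_eq by (simp add: algebra_simps)

definition larger_root :: "real \<Rightarrow> real \<Rightarrow> real" where
  "larger_root b c = b / 2 + sqrt (b\<^sup>2 / 4 - c)"

lemma larger_root_scale: "0 \<le> u \<Longrightarrow> u * larger_root b c = larger_root (u * b) (u\<^sup>2 * c)"
proof -
  assume "0 \<le> u"
  have "sqrt ((u * b)\<^sup>2 / 4 - u\<^sup>2 * c) = sqrt (u\<^sup>2 * (b\<^sup>2 / 4 - c))"
    by (simp add: power_mult_distrib algebra_simps)
  also have "\<dots> = u * sqrt (b\<^sup>2 / 4 - c)"
    using \<open>0 \<le> u\<close> by (simp add: real_sqrt_mult)
  finally show ?thesis
    unfolding larger_root_def by (simp add: algebra_simps)
qed

lemma larger_root_zero: "0 \<le> b \<Longrightarrow> larger_root b 0 = b"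
  by (simp add: larger_root_def power_divide real_sqrt_divide)

lemma mu_plus_of_real_neg:
  assumes "x < 0"
  shows "mu_plus dB dR (of_real x)
    = of_real (larger_root (trace_neg dB dR (sqrt (- x))) (1 / (real dB * real dR)))"
proof -
  define T p where "T = trace_neg dB dR (sqrt (- x))" and "p = 1 / (real dB * real dR)"
  have "0 \<le> p" and "1 + p \<le> T"
    using one_plus_le_trace_neg by (simp_all add: T_def p_def)
  then have "(1 + p)\<^sup>2 \<le> T\<^sup>2"
    by (intro power_mono) auto
  moreover have "(1 + p)\<^sup>2 = 4 * p + (1 - p)\<^sup>2"
    by (simp add: power2_eq_square algebra_simps)
  ultimately have "0 \<le> T\<^sup>2 / 4 - p"
    using zero_le_power2 [of "1 - p"] by linarith
  then have "csqrt ((of_real T)\<^sup>2 / 4 - 1 / (of_nat dB * of_nat dR)) = of_real (sqrt (T\<^sup>2 / 4 - p))"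
    by (simp add: p_def)
  then show ?thesis
    unfolding mu_plus_def trace_T0_of_real_neg[OF assms] by (simp add: larger_root_def T_def p_def)
qed

lemma exp_scaled_cosh_square:
  fixes t :: real
  shows "exp (- 2 * t) * (cosh t)\<^sup>2 = (1 + exp (- 2 * t))\<^sup>2 / 4"
proof -
  have "exp (- 2 * t) = exp (- t) ^ 2"
    by (simp add: exp_of_nat_mult [symmetric])
  then show ?thesis
    by (simp add: cosh_field_def power2_eq_square field_simps exp_minus)
qed

lemma exp_scaled_sinh_square:
  fixes t :: real
  shows "exp (- 2 * t) * (sinh t)\<^sup>2 = (1 - exp (- 2 * t))\<^sup>2 / 4"
proof -
  have "exp (- 2 * t) = exp (- t) ^ 2"
    by (simp add: exp_of_nat_mult [symmetric])
  then show ?thesis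
    by (simp add: sinh_field_def power2_eq_square field_simps exp_minus)
qed

lemma exp_scaled_trace_neg:
  "exp (- 2 * t) * trace_neg dB dR t
     = ((1 + exp (- 2 * t))\<^sup>2 * (1 + 1 / (real dB * real dR))
        + (1 - exp (- 2 * t))\<^sup>2 * (1 / real dB + 1 / real dR)) / 4"
  unfolding trace_neg_def distrib_left mult.left_commute [of "exp (- 2 * t)"]
    exp_scaled_cosh_square exp_scaled_sinh_square
  by (simp add: field_simps)

lemma exp_scaled_mu_plus_of_real_neg:
  assumes neg: "x < 0"
  defines "u \<equiv> exp (- 2 * sqrt (- x))"
  shows "complex_of_real (exp (- 2 * \<bar>Im (csqrt (complex_of_real x))\<bar>)) * mu_plus dB dR (of_real x)
    = of_real (larger_root
        (((1 + u)\<^sup>2 * (1 + 1 / (real dB * real dR)) + (1 - u)\<^sup>2 * (1 / real dB + 1 / real dR)) / 4)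
        (u\<^sup>2 * (1 / (real dB * real dR))))"
proof -
  have "\<bar>Im (csqrt (complex_of_real x))\<bar> = sqrt (- x)"
    using neg by simp
  moreover have "u * larger_root (trace_neg dB dR (sqrt (- x))) (1 / (real dB * real dR))
    = larger_root (u * trace_neg dB dR (sqrt (- x))) (u\<^sup>2 * (1 / (real dB * real dR)))"
    by (simp add: larger_root_scale u_def)
  ultimately show ?thesis
    unfolding mu_plus_of_real_neg [OF neg] u_def exp_scaled_trace_neg by (simp flip: of_real_mult)
qed

lemma tendsto_exp_mu_plus_at_bot:
  "((\<lambda>x::real. complex_of_real (exp (- 2 * \<bar>Im (csqrt (complex_of_real x))\<bar>))
      * mu_plus dB dR (complex_of_real x))
    \<longlongrightarrow> complex_of_real ((1 + 1 / real dB) * (1 + 1 / real dR) / 4)) at_bot"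
proof -
  define p B where "p = 1 / (real dB * real dR)" and "B = 1 / real dB + 1 / real dR"
  define H where "H u = larger_root (((1 + u)\<^sup>2 * (1 + p) + (1 - u)\<^sup>2 * B) / 4) (u\<^sup>2 * p)" for u
  have H_zero: "H 0 = (1 + 1 / real dB) * (1 + 1 / real dR) / 4"
    by (simp add: H_def larger_root_zero p_def B_def algebra_simps)
  have "((\<lambda>x. exp (- 2 * sqrt (- x))) \<longlongrightarrow> 0) at_bot"
    by real_asymp
  then have "((\<lambda>x. H (exp (- 2 * sqrt (- x)))) \<longlongrightarrow> H 0) at_bot"
    unfolding H_def larger_root_def by (intro tendsto_intros) simp_all
  then have "((\<lambda>x. complex_of_real (H (exp (- 2 * sqrt (- x)))))
      \<longlongrightarrow> complex_of_real ((1 + 1 / real dB) * (1 + 1 / real dR) / 4)) at_bot"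
    unfolding H_zero by (rule tendsto_of_real)
  moreover have "\<forall>\<^sub>F x in at_bot. x < (0::real)"
    unfolding eventually_at_bot_dense by blast
  then have "\<forall>\<^sub>F x in at_bot. complex_of_real (H (exp (- 2 * sqrt (- x))))
      = complex_of_real (exp (- 2 * \<bar>Im (csqrt (complex_of_real x))\<bar>)) * mu_plus dB dR (complex_of_real x)"
    by eventually_elim (simp only: exp_scaled_mu_plus_of_real_neg H_def p_def B_def)
  ultimately show ?thesis
    by (rule Lim_transform_eventually)
qed

lemma tendsto_cofactor:
  fixes f g e e' :: "'a \<Rightarrow> 'b::real_normed_field"
  assumes "((\<lambda>x. e' x * f x) \<longlongrightarrow> L) F" and "L \<noteq> 0"
    and "\<And>x. e x * e' x = 1" and "\<And>x. f x * g x = p" and "p \<noteq> 0"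
  shows "((\<lambda>x. e x * g x) \<longlongrightarrow> p / L) F"
proof -
  have quotient: "e x * g x = p / (e' x * f x)" for x
  proof -
    have "(e' x * f x) * (e x * g x) = (e x * e' x) * (f x * g x)"
      by (simp only: mult_ac)
    also have "\<dots> = p"
      using assms(3,4) by simp
    finally have "(e' x * f x) * (e x * g x) = p" .
    with \<open>p \<noteq> 0\<close> show ?thesis
      by (metis mult_zero_left nonzero_eq_divide_eq mult.commute)
  qed
  show ?thesis
    unfolding quotient by (rule tendsto_divide [OF tendsto_const assms(1,2)])
qed

theorem lemma4p1:
  fixes dB dR :: nat
  assumes "dB \<ge> 1" and "dR \<ge> 1"
  shows "(((\<lambda>x::real. complex_of_real (exp (- 2 * \<bar>Im (csqrt (complex_of_real x))\<bar>))
              * mu_plus dB dR (complex_of_real x))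
           \<longlongrightarrow> ((of_nat dR + 1) / (2 * of_nat dR)) * ((of_nat dB + 1) / (2 * of_nat dB))) at_bot)
         \<and> (((\<lambda>x::real. complex_of_real (exp (2 * \<bar>Im (csqrt (complex_of_real x))\<bar>))
              * mu_minus dB dR (complex_of_real x))
           \<longlongrightarrow> (2 / (of_nat dR + 1)) * (2 / (of_nat dB + 1))) at_bot)"
    (is "(?plus \<longlongrightarrow> ?L) at_bot \<and> (?minus \<longlongrightarrow> _) at_bot")
proof -
  have succ_nonzero: "(of_nat dR + 1 :: complex) \<noteq> 0" "(of_nat dB + 1 :: complex) \<noteq> 0"
    by (metis of_nat_Suc add.commute of_nat_eq_0_iff Zero_not_Suc)+
  with assms have "?L \<noteq> 0" and det: "1 / (of_nat dB * of_nat dR) \<noteq> (0::complex)"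
    by simp_all
  have minus_limit: "1 / (of_nat dB * of_nat dR) / ?L = (2 / (of_nat dR + 1)) * (2 / (of_nat dB + 1))"
    using assms succ_nonzero by (simp add: field_simps)
  have "complex_of_real ((1 + 1 / real dB) * (1 + 1 / real dR) / 4) = ?L"
    using assms by (simp add: field_simps)
  then have plus: "(?plus \<longlongrightarrow> ?L) at_bot"
    using tendsto_exp_mu_plus_at_bot by metis
  have "(?minus \<longlongrightarrow> 1 / (of_nat dB * of_nat dR) / ?L) at_bot"
    by (rule tendsto_cofactor [OF plus \<open>?L \<noteq> 0\<close> _ mu_plus_mult_mu_minus det])
      (simp flip: of_real_mult exp_add)
  with plus show ?thesis
    unfolding minus_limit by blast
qed

end
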